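(* Let $f\colon\mathbb{Z}_p^r\to\mathbb{Q}_p$ be a continuous function such that $f(\overline{x})\neq 0$ for all $\overline{x}\in\mathbb{Z}_p^r$. Then $R(f)$ is not dense in $\mathbb{Q}_p$.
   Context: For a function $f$ on $\mathbb{Z}_p^r$, $R(f)=\{f(\overline{x})/f(\overline{y}) : \overline{x},\overline{y}\in\mathbb{Z}^r,\ f(\overline{y})\neq 0\}$; density is in the $p$-adic topology. *)

theory Defs
  imports "HOL-Analysis.Analysis" "HOL-Computational_Algebra.Primes"
    "HOL-Computational_Algebra.Fraction_Field"
begin

text \<open>
  The prime p is encoded as the
  cardinality of a finite type 'p (class prime_card), so that Z_p can be a type.
  Z_p is the inverse limit of the rings Z / p^n Z: an element is a compatible sequence
  of residues x n in [0, p^n).  Q_p is the fraction field of Z_p.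
\<close>

class prime_card = finite +
  assumes prime_card: "prime CARD('a)"

definition zp_set :: "nat \<Rightarrow> (nat \<Rightarrow> int) set" where
  "zp_set p = {x. \<forall>n. 0 \<le> x n \<and> x n < int p ^ n \<and> x (Suc n) mod (int p ^ n) = x n}"

lemma zp_compat:
  "x \<in> zp_set p \<Longrightarrow> x (Suc n) mod (int p ^ n) = x n mod (int p ^ n)"
  unfolding zp_set_def by auto

lemma zp_compat_mod:
  "x \<in> zp_set p \<Longrightarrow> x n mod (int p ^ n) = x n"
  unfolding zp_set_def by auto

lemma zp_set_modI:
  assumes "p > 0" and "\<And>n. g (Suc n) mod (int p ^ n) = g n mod (int p ^ n)"
  shows "(\<lambda>n. g n mod (int p ^ n)) \<in> zp_set p"
proof -
  have dv: "int p ^ n dvd int p ^ Suc n" for n by simp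
  have "(g (Suc n) mod int p ^ Suc n) mod int p ^ n = g n mod int p ^ n" for n
    using mod_mod_cancel[OF dv] assms(2) by metis
  with assms(1) show ?thesis by (auto simp: zp_set_def)
qed

lemma zp_closed2:
  assumes "p > 0" "x \<in> zp_set p" "y \<in> zp_set p"
    and cong: "\<And>a b a' b' c. a mod c = a' mod c \<Longrightarrow> b mod c = b' mod c \<Longrightarrow> g a b mod c = g a' b' mod c"
  shows "(\<lambda>n. g (x n) (y n) mod (int p ^ n)) \<in> zp_set p"
  by (rule zp_set_modI[OF assms(1)], rule cong) (simp_all add: zp_compat[OF assms(2)] zp_compat[OF assms(3)])

lemma zp_closed1:
  assumes "p > 0" "x \<in> zp_set p"
    and cong: "\<And>a a' c. a mod c = a' mod c \<Longrightarrow> g a mod c = g a' mod c"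
  shows "(\<lambda>n. g (x n) mod (int p ^ n)) \<in> zp_set p"
  by (rule zp_set_modI[OF assms(1)], rule cong) (simp add: zp_compat[OF assms(2)])

typedef ('p::finite) zp = "zp_set CARD('p)"
  by (rule exI[of _ "\<lambda>n. 0"]) (simp add: zp_set_def)

setup_lifting type_definition_zp

instantiation zp :: (prime_card) comm_ring_1
begin

lift_definition zero_zp :: "'a zp" is "\<lambda>n. 0" by (simp add: zp_set_def)

lift_definition one_zp :: "'a zp" is "\<lambda>n. 1 mod (int CARD('a) ^ n)"
  by (rule zp_set_modI) simp_all

lift_definition plus_zp :: "'a zp \<Rightarrow> 'a zp \<Rightarrow> 'a zp" is
  "\<lambda>x y n. (x n + y n) mod (int CARD('a) ^ n)"
  by (rule zp_closed2[where g="(+)"], simp, assumption, assumption, erule (1) mod_add_cong)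

lift_definition uminus_zp :: "'a zp \<Rightarrow> 'a zp" is
  "\<lambda>x n. (- x n) mod (int CARD('a) ^ n)"
  by (rule zp_closed1[where g="uminus"], simp, assumption, erule mod_minus_cong)

lift_definition minus_zp :: "'a zp \<Rightarrow> 'a zp \<Rightarrow> 'a zp" is
  "\<lambda>x y n. (x n - y n) mod (int CARD('a) ^ n)"
  by (rule zp_closed2[where g="(-)"], simp, assumption, assumption, erule (1) mod_diff_cong)

lift_definition times_zp :: "'a zp \<Rightarrow> 'a zp \<Rightarrow> 'a zp" is
  "\<lambda>x y n. (x n * y n) mod (int CARD('a) ^ n)"
  by (rule zp_closed2[where g="(*)"], simp, assumption, assumption, erule (1) mod_mult_cong)

instance
proof
  fix a b c :: "'a zp"
  show "a * b * c = a * (b * c)"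
    by transfer (simp add: mod_mult_left_eq mod_mult_right_eq mult.assoc)
  show "a * b = b * a" by transfer (simp add: mult.commute)
  show "1 * a = a" by transfer (simp add: mod_mult_left_eq zp_compat_mod)
  show "a + b + c = a + (b + c)"
    by transfer (simp add: mod_add_left_eq mod_add_right_eq add.assoc)
  show "a + b = b + a" by transfer (simp add: add.commute)
  show "0 + a = a" by transfer (simp add: zp_compat_mod)
  show "- a + a = 0" by transfer (simp add: mod_add_left_eq)
  show "a - b = a + - b" by transfer (simp add: mod_add_right_eq)
  show "(a + b) * c = a * c + b * c"
    by transfer (simp add: mod_mult_left_eq mod_add_eq distrib_right)
  show "(0::'a zp) \<noteq> 1"
  proof transfer
    show "(\<lambda>n. 0) \<noteq> (\<lambda>n. 1 mod int CARD('a) ^ n)"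
    proof
      assume h: "(\<lambda>n::nat. 0::int) = (\<lambda>n. 1 mod int CARD('a) ^ n)"
      have "CARD('a) \<ge> 2" using prime_card prime_ge_2_nat by blast
      then have "(1::int) mod (int CARD('a) ^ 1) = 1" by simp
      moreover have "(0::int) = 1 mod (int CARD('a) ^ 1)" using fun_cong[OF h, of 1] by simp
      ultimately show False by simp
    qed
  qed
qed

end


lemma zp_x0: "x \<in> zp_set p \<Longrightarrow> x 0 = 0"
proof -
  assume "x \<in> zp_set p"
  then have "0 \<le> x 0 \<and> x 0 < int p ^ 0" unfolding zp_set_def by blast
  then show "x 0 = 0" by simp
qed

lemma zp_compat_le:
  assumes "x \<in> zp_set p" "k \<le> n"
  shows "x n mod (int p ^ k) = x k"
  using assms(2)
proof (induction n)
  case 0 then show ?case using zp_x0[OF assms(1)] by simp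
next
  case (Suc n)
  show ?case
  proof (cases "k = Suc n")
    case True then show ?thesis using zp_compat_mod[OF assms(1), of "Suc n"] by simp
  next
    case False
    then have kn: "k \<le> n" using Suc.prems by simp
    have dv: "int p ^ k dvd int p ^ n" using kn by (simp add: le_imp_power_dvd)
    have "x (Suc n) mod int p ^ k = (x (Suc n) mod int p ^ n) mod int p ^ k"
      using mod_mod_cancel[OF dv] by simp
    also have "\<dots> = x n mod int p ^ k" using zp_compat_mod[OF assms(1)] zp_compat[OF assms(1)]
      by metis
    also have "\<dots> = x k" using Suc.IH[OF kn] .
    finally show ?thesis .
  qed
qed

lemma zp_val_exists:
  assumes x: "x \<in> zp_set p" and p: "prime p" and nz: "x \<noteq> (\<lambda>n. 0)"
  shows "\<exists>a. \<forall>n>a. \<exists>s. x n = int p ^ a * s \<and> \<not> int p dvd s"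
proof -
  obtain m where m: "x m \<noteq> 0" using nz by auto
  have x0: "x 0 = 0" using zp_x0[OF x] .
  then obtain j where j: "m = Suc j" using m by (cases m) auto
  define a where "a = (LEAST j. x (Suc j) \<noteq> 0)"
  have xa1: "x (Suc a) \<noteq> 0" unfolding a_def by (rule LeastI[of _ j]) (use m j in simp)
  have xa: "x a = 0"
  proof (cases a)
    case 0 then show ?thesis using x0 by simp
  next
    case (Suc i)
    then have "i < a" by simp
    then have "\<not> x (Suc i) \<noteq> 0" unfolding a_def by (rule not_less_Least)
    then show ?thesis using Suc by simp
  qed
  have "\<exists>s. x n = int p ^ a * s \<and> \<not> int p dvd s" if "n > a" for n
  proof -
    have "x n mod int p ^ a = 0" using zp_compat_le[OF x, of a n] that xa by simp
    then obtain s where s: "x n = int p ^ a * s" by (auto elim: dvdE)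
    have "x n mod int p ^ Suc a = x (Suc a)" using zp_compat_le[OF x, of "Suc a" n] that by simp
    then have "\<not> int p ^ Suc a dvd x n" using xa1 by auto
    then have "\<not> int p dvd s" using s by (auto simp: mult_dvd_mono)
    then show ?thesis using s by blast
  qed
  then show ?thesis by blast
qed

instance zp :: (prime_card) idom
proof
  fix a b :: "'a zp"
  assume "a \<noteq> 0" "b \<noteq> 0"
  then show "a * b \<noteq> 0"
  proof transfer
    fix x y assume x: "x \<in> zp_set CARD('a)" and y: "y \<in> zp_set CARD('a)"
      and nx: "x \<noteq> (\<lambda>n. 0)" and ny: "y \<noteq> (\<lambda>n. 0)"
    define p where "p = CARD('a)"
    have p: "prime p" unfolding p_def by (rule prime_card)
    have pi: "prime (int p)" using p by simp
    obtain a where a: "\<forall>n>a. \<exists>s. x n = int p ^ a * s \<and> \<not> int p dvd s"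
      using zp_val_exists[OF x[folded p_def] p nx] by blast
    obtain b where b: "\<forall>n>b. \<exists>s. y n = int p ^ b * s \<and> \<not> int p dvd s"
      using zp_val_exists[OF y[folded p_def] p ny] by blast
    define N where "N = Suc (a + b)"
    have Na: "N > a" and Nb: "N > b" by (simp_all add: N_def)
    obtain s where s: "x N = int p ^ a * s" "\<not> int p dvd s" using a[rule_format, OF Na] by blast
    obtain t where t: "y N = int p ^ b * t" "\<not> int p dvd t" using b[rule_format, OF Nb] by blast
    have st: "\<not> int p dvd s * t" using s(2) t(2) pi prime_dvd_mult_iff by blast
    have "(x N * y N) mod int p ^ N \<noteq> 0"
    proof
      assume "(x N * y N) mod int p ^ N = 0"
      then have "int p ^ (a + b) * int p dvd int p ^ (a + b) * (s * t)"
        using s(1) t(1) by (auto simp: N_def power_add algebra_simps)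
      then have "int p dvd s * t" using pi
        by (subst (asm) dvd_mult_cancel_left) (auto simp: prime_gt_0_int)
      then show False using st by blast
    qed
    then show "(\<lambda>n. (x n * y n) mod int CARD('a) ^ n) \<noteq> (\<lambda>n. 0)"
      unfolding p_def by (metis (mono_tags))
  qed
qed


section \<open>The p-adic numbers and the p-adic absolute value\<close>

type_synonym 'p qp = "'p zp fract"

text \<open>p-adic valuation of a nonzero p-adic integer: the largest a with x = 0 mod p^a,
  i.e. the least n such that the residue of x modulo p^(n+1) is nonzero.\<close>
definition zp_val :: "'p::finite zp \<Rightarrow> nat" where
  "zp_val x = (LEAST n. Rep_zp x (Suc n) \<noteq> 0)"

text \<open>p-adic absolute value on Q_p: |a/b|_p = p^(v(b) - v(a)), computed on any
  representative a/b (well defined since the valuation is additive).\<close>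
definition qp_abs :: "'p::prime_card qp \<Rightarrow> real" where
  "qp_abs q = (if q = 0 then 0 else
     (let (a, b) = (SOME (a, b). b \<noteq> 0 \<and> q = Fract a b)
      in real CARD('p) powi (int (zp_val b) - int (zp_val a))))"

definition zp_to_qp :: "'p::prime_card zp \<Rightarrow> 'p qp" where
  "zp_to_qp u = Fract u 1"

text \<open>Continuity of a map Z_p^r \<rightarrow> Q_p, where Z_p^r ('r \<Rightarrow> 'p zp with 'r a finite
  index type of cardinality r) carries the product topology, given by the max-metric.\<close>
definition padic_continuous :: "(('r::finite \<Rightarrow> 'p::prime_card zp) \<Rightarrow> 'p qp) \<Rightarrow> bool" where
  "padic_continuous f \<longleftrightarrow>
     (\<forall>x. \<forall>\<epsilon>>0. \<exists>\<delta>>0. \<forall>y. (\<forall>i. qp_abs (zp_to_qp (y i - x i)) < \<delta>)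
        \<longrightarrow> qp_abs (f y - f x) < \<epsilon>)"

definition padic_dense :: "'p::prime_card qp set \<Rightarrow> bool" where
  "padic_dense S \<longleftrightarrow> (\<forall>z. \<forall>\<epsilon>>0. \<exists>w\<in>S. qp_abs (w - z) < \<epsilon>)"

definition ratio_set :: "(('r::finite \<Rightarrow> 'p::prime_card zp) \<Rightarrow> 'p qp) \<Rightarrow> 'p qp set" where
  "ratio_set f = {f (\<lambda>i. of_int (x i)) / f (\<lambda>i. of_int (y i)) | x y :: 'r \<Rightarrow> int.
                   f (\<lambda>i. of_int (y i)) \<noteq> 0}"

end

theory Submission
  imports Defs
begin

text \<open>
  Continuity of \<open>f\<close> and the ultrametric inequality make \<open>|f|\<^sub>p\<close> locally constant
  wherever \<open>f\<close> does not vanish, and a locally constant function on the compact space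
  \<open>\<int>\<^sub>p\<^sup>r\<close> takes only finitely many values.  As \<open>f\<close> has no zeros, \<open>|f|\<^sub>p\<close> lies between
  two positive bounds \<open>m \<le> M\<close>, so every element of \<open>R(f)\<close> has absolute value at least
  \<open>m / M\<close> and \<open>0\<close> is not in the closure of \<open>R(f)\<close>.
\<close>

lemma card_prime_card_ge_2: "CARD('p::prime_card) \<ge> 2"
  using prime_card prime_ge_2_nat by blast

lemma Rep_zp_bounds: "0 \<le> Rep_zp (x::'p::finite zp) n \<and> Rep_zp x n < int CARD('p) ^ n"
  using Rep_zp[of x] unfolding zp_set_def by blast

lemma Rep_zp_Suc_mod: "Rep_zp (x::'p::finite zp) (Suc n) mod int CARD('p) ^ n = Rep_zp x n"
  using zp_compat_le[OF Rep_zp[of x], of n "Suc n"] by simp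

lemma Rep_zp_eq_0_iff_le_zp_val:
  fixes x :: "'p::prime_card zp"
  assumes "x \<noteq> 0"
  shows "Rep_zp x k = 0 \<longleftrightarrow> k \<le> zp_val x"
proof
  have "Rep_zp x \<noteq> (\<lambda>n. 0)"
    using assms Rep_zp_inject[of x 0] by (auto simp: zero_zp.rep_eq)
  moreover have "Rep_zp x 0 = 0"
    using zp_x0[OF Rep_zp] .
  ultimately have "\<exists>n. Rep_zp x (Suc n) \<noteq> 0"
    by (metis not0_implies_Suc)
  then have digit_nz: "Rep_zp x (Suc (zp_val x)) \<noteq> 0"
    unfolding zp_val_def by (rule LeastI_ex)
  assume "Rep_zp x k = 0"
  show "k \<le> zp_val x"
  proof (rule ccontr)
    assume "\<not> k \<le> zp_val x"
    then have "Rep_zp x (Suc (zp_val x)) = Rep_zp x k mod int CARD('p) ^ Suc (zp_val x)"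
      using zp_compat_le[OF Rep_zp] by (metis not_less_eq_eq)
    with \<open>Rep_zp x k = 0\<close> digit_nz show False by simp
  qed
next
  assume "k \<le> zp_val x"
  then show "Rep_zp x k = 0"
  proof (cases k)
    case (Suc j)
    with \<open>k \<le> zp_val x\<close> have "j < zp_val x" by simp
    with Suc show ?thesis
      unfolding zp_val_def using not_less_Least by blast
  qed (simp add: zp_x0[OF Rep_zp])
qed

lemma zp_val_eqI:
  fixes x :: "'p::prime_card zp"
  assumes "x \<noteq> 0" "Rep_zp x k = 0" "Rep_zp x (Suc k) \<noteq> 0"
  shows "zp_val x = k"
  using assms Rep_zp_eq_0_iff_le_zp_val[OF assms(1)] by (metis le_antisym not_less_eq_eq)

lemma Rep_zp_eq_power_zp_val_mult:
  fixes x :: "'p::prime_card zp"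
  assumes "x \<noteq> 0" "zp_val x < n"
  shows "\<exists>s. Rep_zp x n = int CARD('p) ^ zp_val x * s \<and> \<not> int CARD('p) dvd s"
proof -
  let ?p = "int CARD('p)" and ?v = "zp_val x"
  have "Rep_zp x n mod ?p ^ ?v = 0"
    using zp_compat_le[OF Rep_zp, of ?v n x] Rep_zp_eq_0_iff_le_zp_val[OF assms(1)] assms(2)
    by simp
  then obtain s where s: "Rep_zp x n = ?p ^ ?v * s" by (auto elim: dvdE)
  have "\<not> ?p dvd s"
  proof
    assume "?p dvd s"
    then have "?p ^ Suc ?v dvd Rep_zp x n" using s by (auto simp: mult_dvd_mono)
    then have "Rep_zp x (Suc ?v) = 0" using zp_compat_le[OF Rep_zp, of "Suc ?v" n x] assms by simp
    then show False using Rep_zp_eq_0_iff_le_zp_val[OF assms(1)] by simp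
  qed
  with s show ?thesis by blast
qed

lemma zp_val_mult:
  fixes x y :: "'p::prime_card zp"
  assumes "x \<noteq> 0" "y \<noteq> 0"
  shows "zp_val (x * y) = zp_val x + zp_val y"
proof -
  let ?p = "int CARD('p)" and ?a = "zp_val x" and ?b = "zp_val y"
  define n where "n = Suc (?a + ?b)"
  obtain s where s: "Rep_zp x n = ?p ^ ?a * s" "\<not> ?p dvd s"
    using Rep_zp_eq_power_zp_val_mult[OF assms(1), of n] n_def by auto
  obtain t where t: "Rep_zp y n = ?p ^ ?b * t" "\<not> ?p dvd t"
    using Rep_zp_eq_power_zp_val_mult[OF assms(2), of n] n_def by auto
  have "prime ?p" using prime_card by simp
  then have "(s * t) mod ?p \<noteq> 0"
    using s(2) t(2) prime_dvd_mult_iff by (metis dvd_eq_mod_eq_0)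
  have "Rep_zp (x * y) n = (?p ^ (?a + ?b) * (s * t)) mod (?p ^ (?a + ?b) * ?p)"
    using s t by (simp add: times_zp.rep_eq n_def power_add algebra_simps)
  also have "\<dots> = ?p ^ (?a + ?b) * ((s * t) mod ?p)"
    by (rule mod_mult_mult1)
  finally have digit: "Rep_zp (x * y) n = ?p ^ (?a + ?b) * ((s * t) mod ?p)" .
  then have "Rep_zp (x * y) (Suc (?a + ?b)) \<noteq> 0"
    using \<open>(s * t) mod ?p \<noteq> 0\<close> card_prime_card_ge_2[where 'p='p] by (simp add: n_def)
  moreover have "Rep_zp (x * y) (?a + ?b) = 0"
    using zp_compat_le[OF Rep_zp, of "?a + ?b" n "x * y"] digit by (simp add: n_def)
  ultimately show ?thesis
    using assms by (intro zp_val_eqI) simp_all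
qed

lemma zp_val_add:
  fixes x y :: "'p::prime_card zp"
  assumes "x \<noteq> 0" "y \<noteq> 0" "x + y \<noteq> 0"
  shows "min (zp_val x) (zp_val y) \<le> zp_val (x + y)"
proof -
  let ?m = "min (zp_val x) (zp_val y)"
  have "Rep_zp x ?m = 0" "Rep_zp y ?m = 0"
    by (simp_all add: Rep_zp_eq_0_iff_le_zp_val assms(1,2))
  then have "Rep_zp (x + y) ?m = 0" by (simp add: plus_zp.rep_eq)
  then show ?thesis using Rep_zp_eq_0_iff_le_zp_val[OF assms(3)] by blast
qed

lemma zp_val_one: "zp_val (1::'p::prime_card zp) = 0"
proof (rule zp_val_eqI)
  show "Rep_zp (1::'p zp) (Suc 0) \<noteq> 0"
    using card_prime_card_ge_2[where 'p='p] by (simp add: one_zp.rep_eq)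
qed (simp_all add: zp_x0[OF Rep_zp])

lemma zp_val_uminus:
  fixes x :: "'p::prime_card zp"
  assumes "x \<noteq> 0"
  shows "zp_val (- x) = zp_val x"
proof -
  have "zp_val (- 1 * - 1 :: 'p zp) = zp_val (- 1 :: 'p zp) + zp_val (- 1 :: 'p zp)"
    by (rule zp_val_mult) simp_all
  then have "zp_val (- 1 :: 'p zp) = 0" using zp_val_one[where 'p='p] by simp
  moreover have "zp_val (- 1 * x) = zp_val (- 1 :: 'p zp) + zp_val x"
    using assms by (intro zp_val_mult) simp_all
  ultimately show ?thesis by simp
qed

section \<open>The \<open>p\<close>-adic absolute value\<close>

lemma real_card_prime_card_gt_1: "real CARD('p::prime_card) > 1"
  using card_prime_card_ge_2[where 'p='p] by simp

lemma qp_abs_Fract: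
  fixes a b :: "'p::prime_card zp"
  assumes "a \<noteq> 0" "b \<noteq> 0"
  shows "qp_abs (Fract a b) = real CARD('p) powi (int (zp_val b) - int (zp_val a))"
proof -
  let ?rep = "\<lambda>(a', b'). b' \<noteq> 0 \<and> Fract a b = Fract a' b'"
  obtain a' b' where chosen: "(SOME r. ?rep r) = (a', b')"
    by fastforce
  have "?rep (a, b)" using assms by simp
  then have "?rep (a', b')" using someI[of ?rep] unfolding chosen by blast
  then have b': "b' \<noteq> 0" and "a * b' = a' * b"
    using eq_fract(1)[OF assms(2)] by auto
  moreover from this have "a' \<noteq> 0" using assms by auto
  ultimately have "zp_val a + zp_val b' = zp_val a' + zp_val b"
    using zp_val_mult assms by metis
  then have "int (zp_val b') - int (zp_val a') = int (zp_val b) - int (zp_val a)"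
    by linarith
  moreover have "Fract a b \<noteq> 0" using assms by (simp add: eq_fract(1) Zero_fract_def)
  ultimately show ?thesis
    unfolding qp_abs_def using chosen by simp
qed

lemma qp_abs_pos: "(q::'p::prime_card qp) \<noteq> 0 \<Longrightarrow> qp_abs q > 0"
proof (cases q rule: Fract_cases_nonzero)
  case (Fract a b)
  then show ?thesis using real_card_prime_card_gt_1[where 'p='p] by (simp add: qp_abs_Fract)
qed auto

lemma qp_abs_nonneg: "qp_abs (q::'p::prime_card qp) \<ge> 0"
  using qp_abs_pos[of q] by (cases "q = 0") (auto simp: qp_abs_def)

lemma qp_abs_divide:
  fixes q r :: "'p::prime_card qp"
  assumes "q \<noteq> 0" "r \<noteq> 0"
  shows "qp_abs (q / r) = qp_abs q / qp_abs r"
proof -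
  obtain a b where q: "q = Fract a b" "b \<noteq> 0" "a \<noteq> 0"
    using assms(1) by (cases q rule: Fract_cases_nonzero) auto
  obtain c d where r: "r = Fract c d" "d \<noteq> 0" "c \<noteq> 0"
    using assms(2) by (cases r rule: Fract_cases_nonzero) auto
  have "qp_abs (q / r) = real CARD('p) powi (int (zp_val (b * c)) - int (zp_val (a * d)))"
    using q r by (simp add: qp_abs_Fract)
  also have "int (zp_val (b * c)) - int (zp_val (a * d))
      = (int (zp_val b) - int (zp_val a)) - (int (zp_val d) - int (zp_val c))"
    using q r by (simp add: zp_val_mult)
  also have "real CARD('p) powi \<dots> = qp_abs q / qp_abs r"
    using q r real_card_prime_card_gt_1[where 'p='p] by (simp add: qp_abs_Fract power_int_diff)
  finally show ?thesis .
qed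

lemma qp_abs_add_le_max: "qp_abs ((q::'p::prime_card qp) + r) \<le> max (qp_abs q) (qp_abs r)"
proof (cases "q = 0 \<or> r = 0 \<or> q + r = 0")
  case True
  then show ?thesis using qp_abs_nonneg[of q] qp_abs_nonneg[of r]
    by (auto simp: qp_abs_def le_max_iff_disj)
next
  case False
  obtain a b where q: "q = Fract a b" "b \<noteq> 0" "a \<noteq> 0"
    using False by (cases q rule: Fract_cases_nonzero) auto
  obtain c d where r: "r = Fract c d" "d \<noteq> 0" "c \<noteq> 0"
    using False by (cases r rule: Fract_cases_nonzero) auto
  have sum: "q + r = Fract (a * d + c * b) (b * d)" using q r by simp
  then have "a * d + c * b \<noteq> 0" using False by (auto simp: fract_collapse)
  then have val_num: "min (zp_val a + zp_val d) (zp_val c + zp_val b) \<le> zp_val (a * d + c * b)"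
    using zp_val_add[of "a * d" "c * b"] q r by (simp add: zp_val_mult)
  have abs_sum: "qp_abs (q + r)
      = real CARD('p) powi (int (zp_val b + zp_val d) - int (zp_val (a * d + c * b)))"
    using sum \<open>a * d + c * b \<noteq> 0\<close> q r by (simp add: qp_abs_Fract zp_val_mult)
  have gt1: "real CARD('p) \<ge> 1" using real_card_prime_card_gt_1[where 'p='p] by simp
  show ?thesis
  proof (cases "zp_val a + zp_val d \<le> zp_val c + zp_val b")
    case True
    then have "qp_abs (q + r) \<le> real CARD('p) powi (int (zp_val b) - int (zp_val a))"
      unfolding abs_sum using val_num gt1 by (intro power_int_increasing) auto
    then show ?thesis using q by (simp add: qp_abs_Fract)
  next
    case False
    then have "qp_abs (q + r) \<le> real CARD('p) powi (int (zp_val d) - int (zp_val c))"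
      unfolding abs_sum using val_num gt1 by (intro power_int_increasing) auto
    then show ?thesis using r by (simp add: qp_abs_Fract)
  qed
qed

lemma qp_abs_minus: "qp_abs (- (q::'p::prime_card qp)) = qp_abs q"
proof (cases q rule: Fract_cases_nonzero)
  case (Fract a b)
  then show ?thesis by (simp add: qp_abs_Fract zp_val_uminus)
qed simp

lemma qp_abs_eq_if_diff_less:
  fixes a b :: "'p::prime_card qp"
  assumes "qp_abs (a - b) < qp_abs b"
  shows "qp_abs a = qp_abs b"
proof (rule antisym)
  have "qp_abs a \<le> max (qp_abs (a - b)) (qp_abs b)"
    using qp_abs_add_le_max[of "a - b" b] by simp
  with assms show "qp_abs a \<le> qp_abs b" by simp
  have "qp_abs b \<le> max (qp_abs (a - b)) (qp_abs a)"
    using qp_abs_add_le_max[of "- (a - b)" a] qp_abs_minus[of "a - b"] by simp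
  with assms show "qp_abs b \<le> qp_abs a" by (auto simp: max_def split: if_splits)
qed

lemma qp_abs_zp_to_qp_le:
  fixes u :: "'p::prime_card zp"
  assumes "Rep_zp u n = 0"
  shows "qp_abs (zp_to_qp u) \<le> real CARD('p) powi (- int n)"
proof (cases "u = 0")
  case True
  then show ?thesis by (simp add: zp_to_qp_def fract_collapse qp_abs_def)
next
  case False
  then have "n \<le> zp_val u" using Rep_zp_eq_0_iff_le_zp_val assms by blast
  have "qp_abs (zp_to_qp u) = real CARD('p) powi (- int (zp_val u))"
    unfolding zp_to_qp_def using False by (simp add: qp_abs_Fract zp_val_one)
  also have "\<dots> \<le> real CARD('p) powi (- int n)"
    using \<open>n \<le> zp_val u\<close> real_card_prime_card_gt_1[where 'p='p]
    by (intro power_int_increasing) auto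
  finally show ?thesis .
qed

section \<open>Cylinders and compactness of \<open>\<int>\<^sub>p\<^sup>r\<close>\<close>

definition zp_cylinder :: "nat \<Rightarrow> ('r \<Rightarrow> 'p::finite zp) \<Rightarrow> ('r \<Rightarrow> 'p zp) set" where
  "zp_cylinder n x = {y. \<forall>i. Rep_zp (y i) n = Rep_zp (x i) n}"

lemma self_in_zp_cylinder [simp]: "x \<in> zp_cylinder n x"
  by (simp add: zp_cylinder_def)

lemma zp_cylinder_eq: "y \<in> zp_cylinder n x \<Longrightarrow> zp_cylinder n y = zp_cylinder n x"
  by (simp add: zp_cylinder_def)

lemma zp_cylinder_0 [simp]: "zp_cylinder 0 x = UNIV"
  by (simp add: zp_cylinder_def zp_x0[OF Rep_zp])

lemma zp_cylinder_Suc_subset: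
  fixes x :: "'r \<Rightarrow> 'p::finite zp"
  shows "zp_cylinder (Suc n) x \<subseteq> zp_cylinder n x"
proof
  fix y assume "y \<in> zp_cylinder (Suc n) x"
  then have "Rep_zp (y i) (Suc n) mod int CARD('p) ^ n = Rep_zp (x i) (Suc n) mod int CARD('p) ^ n"
    for i by (simp add: zp_cylinder_def)
  then show "y \<in> zp_cylinder n x" by (simp add: zp_cylinder_def Rep_zp_Suc_mod)
qed

lemma finite_range_zp_cylinder:
  "finite (range (zp_cylinder n :: ('r::finite \<Rightarrow> 'p::finite zp) \<Rightarrow> _))"
proof -
  let ?digits = "Pi UNIV (\<lambda>_::'r. {0..<int CARD('p) ^ n})"
  have "range (zp_cylinder n :: ('r \<Rightarrow> 'p zp) \<Rightarrow> _)
      \<subseteq> (\<lambda>d. {y. \<forall>i. Rep_zp (y i) n = d i}) ` ?digits"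
  proof
    fix C assume "C \<in> range (zp_cylinder n :: ('r \<Rightarrow> 'p zp) \<Rightarrow> _)"
    then obtain x :: "'r \<Rightarrow> 'p zp" where "C = zp_cylinder n x" by blast
    moreover have "(\<lambda>i. Rep_zp (x i) n) \<in> ?digits"
      by (simp add: Rep_zp_bounds)
    ultimately show "C \<in> (\<lambda>d. {y. \<forall>i. Rep_zp (y i) n = d i}) ` ?digits"
      unfolding zp_cylinder_def by (auto intro!: image_eqI[where x="\<lambda>i. Rep_zp (x i) n"])
  qed
  moreover have "finite ?digits"
    using finite_PiE[of UNIV "\<lambda>_::'r. {0..<int CARD('p) ^ n}"] by (simp add: PiE_UNIV_domain)
  ultimately show ?thesis by (rule finite_subset[OF _ finite_imageI])
qed

lemma zp_cylinder_refine:
  fixes x :: "'r::finite \<Rightarrow> 'p::finite zp"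
  assumes "infinite (g ` zp_cylinder n x)"
  shows "\<exists>y \<in> zp_cylinder n x. infinite (g ` zp_cylinder (Suc n) y)"
proof (rule ccontr)
  assume "\<not> ?thesis"
  then have "\<forall>C \<in> zp_cylinder (Suc n) ` zp_cylinder n x. finite (g ` C)" by blast
  moreover have "finite (zp_cylinder (Suc n) ` zp_cylinder n x)"
    using finite_range_zp_cylinder by (rule finite_subset[rotated]) blast
  ultimately have "finite (\<Union>C \<in> zp_cylinder (Suc n) ` zp_cylinder n x. g ` C)" by blast
  moreover have "zp_cylinder n x = (\<Union>y \<in> zp_cylinder n x. zp_cylinder (Suc n) y)"
    using zp_cylinder_Suc_subset zp_cylinder_eq by fastforce
  ultimately show False using assms by (metis image_UN image_image)
qed

lemma zp_coherent_limit:
  fixes y :: "nat \<Rightarrow> 'p::finite zp"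
  assumes "\<And>k. Rep_zp (y (Suc k)) k = Rep_zp (y k) k"
  shows "\<exists>x :: 'p zp. \<forall>k. Rep_zp x k = Rep_zp (y k) k"
proof -
  let ?s = "\<lambda>k. Rep_zp (y k) k"
  have "?s (Suc k) mod int CARD('p) ^ k = ?s k" for k
    using Rep_zp_Suc_mod[of "y (Suc k)" k] assms by simp
  then have "?s \<in> zp_set CARD('p)" by (simp add: zp_set_def Rep_zp_bounds)
  then have "Rep_zp (Abs_zp ?s :: 'p zp) = ?s" by (rule Abs_zp_inverse)
  then show ?thesis by (intro exI[of _ "Abs_zp ?s :: 'p zp"]) simp
qed

text \<open>Koenig's lemma: the nested cylinders with infinitely many values of \<open>g\<close> shrink to a
  point at which \<open>g\<close> cannot be locally constant.\<close>
theorem finite_range_if_constant_on_cylinders: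
  fixes g :: "('r::finite \<Rightarrow> 'p::finite zp) \<Rightarrow> 'b"
  assumes "\<And>x. \<exists>n. \<forall>y \<in> zp_cylinder n x. g y = g x"
  shows "finite (range g)"
proof (rule ccontr)
  assume "infinite (range g)"
  have "\<exists>yy. \<forall>n. infinite (g ` zp_cylinder n (yy n)) \<and> yy (Suc n) \<in> zp_cylinder n (yy n)"
  proof (rule dependent_nat_choice)
    show "\<exists>x. infinite (g ` zp_cylinder 0 x)" using \<open>infinite (range g)\<close> by simp
  next
    fix x n assume "infinite (g ` zp_cylinder n x)"
    then show "\<exists>y. infinite (g ` zp_cylinder (Suc n) y) \<and> y \<in> zp_cylinder n x"
      using zp_cylinder_refine by blast
  qed
  then obtain yy where yy: "\<And>n. infinite (g ` zp_cylinder n (yy n))"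
    and coherent: "\<And>n i. Rep_zp (yy (Suc n) i) n = Rep_zp (yy n i) n"
    unfolding zp_cylinder_def by blast
  have "\<exists>xi :: 'p zp. \<forall>k. Rep_zp xi k = Rep_zp (yy k i) k" for i
    using zp_coherent_limit[of "\<lambda>k. yy k i"] coherent by blast
  then obtain x :: "'r \<Rightarrow> 'p zp" where "\<And>i k. Rep_zp (x i) k = Rep_zp (yy k i) k"
    using choice[of "\<lambda>i xi. \<forall>k. Rep_zp xi k = Rep_zp (yy k i) k"] by blast
  then have cyl: "zp_cylinder n x = zp_cylinder n (yy n)" for n
    by (intro zp_cylinder_eq) (simp add: zp_cylinder_def)
  obtain N where "\<forall>y \<in> zp_cylinder N x. g y = g x" using assms by blast
  then have "g ` zp_cylinder N x \<subseteq> {g x}" by blast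
  with yy[of N] cyl[of N] show False by (metis finite.simps finite_subset)
qed

section \<open>Local constancy of \<open>|f|\<^sub>p\<close>\<close>

lemma qp_abs_zp_to_qp_diff_le_if_cylinder:
  fixes x y :: "'r \<Rightarrow> 'p::prime_card zp"
  assumes "y \<in> zp_cylinder n x"
  shows "qp_abs (zp_to_qp (y i - x i)) \<le> real CARD('p) powi (- int n)"
  using assms by (intro qp_abs_zp_to_qp_le) (simp add: zp_cylinder_def minus_zp.rep_eq)

lemma padic_continuous_abs_locally_constant:
  fixes f :: "('r::finite \<Rightarrow> 'p::prime_card zp) \<Rightarrow> 'p qp"
  assumes "padic_continuous f" "f x \<noteq> 0"
  shows "\<exists>n. \<forall>y \<in> zp_cylinder n x. qp_abs (f y) = qp_abs (f x)"
proof -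
  have "qp_abs (f x) > 0" using assms(2) by (rule qp_abs_pos)
  then obtain \<delta> where "\<delta> > 0" and \<delta>:
    "\<forall>y. (\<forall>i. qp_abs (zp_to_qp (y i - x i)) < \<delta>) \<longrightarrow> qp_abs (f y - f x) < qp_abs (f x)"
    using assms(1) unfolding padic_continuous_def by blast
  have "1 / real CARD('p) < 1" using real_card_prime_card_gt_1[where 'p='p] by simp
  then obtain n where "(1 / real CARD('p)) ^ n < \<delta>" using real_arch_pow_inv \<open>\<delta> > 0\<close> by blast
  then have n: "real CARD('p) powi (- int n) < \<delta>"
    by (simp add: power_int_minus power_one_over inverse_eq_divide)
  have "qp_abs (f y) = qp_abs (f x)" if "y \<in> zp_cylinder n x" for y
  proof (rule qp_abs_eq_if_diff_less, rule \<delta>[rule_format])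
    fix i
    show "qp_abs (zp_to_qp (y i - x i)) < \<delta>"
      using qp_abs_zp_to_qp_diff_le_if_cylinder[OF that, of i] n by linarith
  qed
  then show ?thesis by blast
qed

lemma ratio_set_bounded_away_from_0:
  fixes f :: "('r::finite \<Rightarrow> 'p::prime_card zp) \<Rightarrow> 'p qp"
  assumes fin: "finite (range (\<lambda>x. qp_abs (f x)))" and nz: "\<forall>x. f x \<noteq> 0"
  shows "\<exists>\<epsilon> > 0. \<forall>w \<in> ratio_set f. \<epsilon> \<le> qp_abs w"
proof -
  let ?g = "\<lambda>x. qp_abs (f x)"
  define m where "m = Min (range ?g)"
  define M where "M = Max (range ?g)"
  have pos: "?g x > 0" for x using nz by (simp add: qp_abs_pos)
  have m: "m \<le> ?g x" for x
    unfolding m_def using fin by (intro Min_le) auto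
  have M: "?g x \<le> M" for x
    unfolding M_def using fin by (intro Max_ge) auto
  have "m \<in> range ?g" unfolding m_def using fin by (intro Min_in) auto
  then have "m > 0" using pos by auto
  moreover have "M > 0" using pos[of undefined] M[of undefined] by linarith
  moreover have "m / M \<le> qp_abs w" if "w \<in> ratio_set f" for w
  proof -
    obtain x y where w: "w = f x / f y"
      using \<open>w \<in> ratio_set f\<close> unfolding ratio_set_def by blast
    have "m / M \<le> ?g x / ?g y"
      using m[of x] M[of y] pos[of x] pos[of y] by (intro frac_le) simp_all
    also have "\<dots> = qp_abs w" unfolding w using nz by (simp add: qp_abs_divide)
    finally show ?thesis .
  qed
  ultimately show ?thesis by (intro exI[of _ "m / M"]) simp
qed

theorem lemma2p4:
  fixes f :: "('r::finite \<Rightarrow> 'p::prime_card zp) \<Rightarrow> 'p qp"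
  assumes "padic_continuous f"
    and "\<forall>x. f x \<noteq> 0"
  shows "\<not> padic_dense (ratio_set f)"
proof
  have "\<exists>n. \<forall>y \<in> zp_cylinder n x. qp_abs (f y) = qp_abs (f x)" for x
    using padic_continuous_abs_locally_constant assms by blast
  then have "finite (range (\<lambda>x. qp_abs (f x)))"
    by (rule finite_range_if_constant_on_cylinders)
  then obtain \<epsilon> where "\<epsilon> > 0" and bound: "\<forall>w \<in> ratio_set f. \<epsilon> \<le> qp_abs w"
    using ratio_set_bounded_away_from_0 assms(2) by blast
  assume "padic_dense (ratio_set f)"
  then obtain w where "w \<in> ratio_set f" and "qp_abs (w - 0) < \<epsilon>"
    using \<open>\<epsilon> > 0\<close> unfolding padic_dense_def by blast
  with bound show False by fastforce
qed

end
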